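(* Let $\beta\in(3/2,\beta^*]$. Then $\mathbb P(D)=1$.
   Context: $\beta^*\approx1.5437$ is the real root of $x^3-2x^2+2x=2$. $\vec q_0=(0,0)$, $\vec q_1=(1,0)$, $\vec q_2=(0,1)$, $f_i(\vec z)=(\vec z+\vec q_i)/\beta$. $H=\{(x,y):x<\frac1\beta,\ y<\frac1\beta,\ x+y>\frac{1}{\beta(\beta-1)}\}$; $\tilde C_{01}=\{x\ge\frac1\beta,\ y\ge0,\ x+y\le\frac{1}{\beta(\beta-1)}\}$; $\tilde C_{12}=\{x\ge\frac1\beta,\ y\ge\frac1\beta,\ x+y\le\frac1{\beta-1}\}$; $\tilde C_{02}=\{x\ge0,\ y\ge\frac1\beta,\ x+y\le\frac{1}{\beta(\beta-1)}\}$; for $ij\in\{01,12,02\}$, $C_{ij}=\tilde C_{ij}\setminus\bigl(\bigcup_{n\ge1}f_if_j^n(H)\cup\bigcup_{n\ge1}f_jf_i^n(H)\bigr)$, and $C=C_{01}\cup C_{12}\cup C_{02}$. $\Upsilon=\{0,1,2\}^{\mathbb N}$ with product $\sigma$-algebra and uniform product measure $\mathbb P$. $D$ is the set of $(b_1,b_2,\ldots)\in\Upsilon$ such that $\sum_{i\ge1}\vec q_{b_{j+i-1}}\beta^{-i}\in C$ for infinitely many $j$. *)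

theory Defs
  imports "HOL-Probability.Probability"
begin

definition beta_star :: real where
  "beta_star = (THE x::real. x^3 - 2*x^2 + 2*x = 2)"

text \<open>The vectors q_0, q_1, q_2 in the plane (digits outside {0,1,2} never occur).\<close>
definition qv :: "nat \<Rightarrow> real \<times> real" where
  "qv i = (if i = 1 then (1,0) else if i = 2 then (0,1) else (0,0))"

definition fmap :: "real \<Rightarrow> nat \<Rightarrow> real \<times> real \<Rightarrow> real \<times> real" where
  "fmap \<beta> i z = scaleR (1/\<beta>) (z + qv i)"

definition Hset :: "real \<Rightarrow> (real \<times> real) set" where
  "Hset \<beta> = {(x,y). x < 1/\<beta> \<and> y < 1/\<beta> \<and> x + y > 1/(\<beta>*(\<beta>-1))}"

definition Ct01 :: "real \<Rightarrow> (real \<times> real) set" where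
  "Ct01 \<beta> = {(x,y). x \<ge> 1/\<beta> \<and> y \<ge> 0 \<and> x + y \<le> 1/(\<beta>*(\<beta>-1))}"

definition Ct12 :: "real \<Rightarrow> (real \<times> real) set" where
  "Ct12 \<beta> = {(x,y). x \<ge> 1/\<beta> \<and> y \<ge> 1/\<beta> \<and> x + y \<le> 1/(\<beta>-1)}"

definition Ct02 :: "real \<Rightarrow> (real \<times> real) set" where
  "Ct02 \<beta> = {(x,y). x \<ge> 0 \<and> y \<ge> 1/\<beta> \<and> x + y \<le> 1/(\<beta>*(\<beta>-1))}"

definition Cpart :: "real \<Rightarrow> nat \<Rightarrow> nat \<Rightarrow> (real \<times> real) set \<Rightarrow> (real \<times> real) set" where
  "Cpart \<beta> i j T = T - (\<Union>n\<in>{1..}. (fmap \<beta> i \<circ> (fmap \<beta> j ^^ n)) ` Hset \<beta>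
                              \<union> (fmap \<beta> j \<circ> (fmap \<beta> i ^^ n)) ` Hset \<beta>)"

definition Cset :: "real \<Rightarrow> (real \<times> real) set" where
  "Cset \<beta> = Cpart \<beta> 0 1 (Ct01 \<beta>) \<union> Cpart \<beta> 1 2 (Ct12 \<beta>) \<union> Cpart \<beta> 0 2 (Ct02 \<beta>)"

text \<open>Sequences b = (b_1, b_2, ...) are represented as \<omega> :: nat \<Rightarrow> nat with b_k = \<omega> (k-1).\<close>
definition tailpt :: "real \<Rightarrow> (nat \<Rightarrow> nat) \<Rightarrow> nat \<Rightarrow> real \<times> real" where
  "tailpt \<beta> \<omega> j = (\<Sum>i. scaleR (1 / \<beta>^(Suc i)) (qv (\<omega> (j + i))))"

definition Ups :: "(nat \<Rightarrow> nat) measure" where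
  "Ups = PiM UNIV (\<lambda>_. uniform_count_measure {0,1,2::nat})"

definition Dset :: "real \<Rightarrow> (nat \<Rightarrow> nat) set" where
  "Dset \<beta> = {\<omega>. (\<forall>n. \<omega> n \<in> {0,1,2}) \<and> infinite {j. tailpt \<beta> \<omega> j \<in> Cset \<beta>}}"

end

theory Submission
  imports Defs "HOL-Library.Omega_Words_Fun"
begin

text \<open>Reading the digits 1, 2, 0, 0, 0, 0, 0 from position m puts the tail point into
  C_01: its first coordinate is at least 1/\<beta>, its second exceeds 1/\<beta>^3, which keeps it
  off every excluded piece f_i f_j^n(H) with i, j \<in> {0, 1}, and its coordinate sum is at
  most 1/\<beta> + 1/\<beta>^2 + 1/(\<beta>^7 (\<beta> - 1)) \<le> 1/(\<beta> (\<beta> - 1)), which holds for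
  3/2 < \<beta> \<le> 31/20, a range containing \<beta>*. Under the uniform product measure the
  disjoint blocks at the positions 7k are independent and each equals this word with
  probability 3^-7, so almost surely infinitely many of them do.\<close>

lemma qv_nonneg: "fst (qv i) \<ge> 0" "snd (qv i) \<ge> 0"
  by (auto simp: qv_def)

lemma qv_coord_sum_le_1: "fst (qv i) + snd (qv i) \<le> 1"
  by (auto simp: qv_def)

lemma norm_qv_le_1: "norm (qv i) \<le> 1"
  by (auto simp: qv_def)

lemma fmap_Pair: "fmap \<beta> i (a, b) = ((a + fst (qv i)) / \<beta>, (b + snd (qv i)) / \<beta>)"
  by (cases "qv i") (simp add: fmap_def divide_inverse algebra_simps)

lemma sums_inverse_powers:
  assumes "(\<beta>::real) > 1"
  shows "(\<lambda>i. (1/\<beta>) ^ Suc i) sums (1/(\<beta> - 1))"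
proof -
  have "(\<lambda>i. (1/\<beta>) ^ Suc i) sums ((1/\<beta>) * (1 / (1 - 1/\<beta>)))"
    unfolding power_Suc using assms by (intro sums_mult geometric_sums) simp
  also have "(1/\<beta>) * (1 / (1 - 1/\<beta>)) = 1/(\<beta> - 1)"
    using assms by (simp add: field_simps)
  finally show ?thesis .
qed

lemma summable_tailpt:
  assumes "(\<beta>::real) > 1"
  shows "summable (\<lambda>i. (1 / \<beta>^(Suc i)) *\<^sub>R qv (\<omega> (j + i)))"
proof (rule summable_comparison_test)
  show "summable (\<lambda>i. (1/\<beta>) ^ Suc i)"
    using sums_inverse_powers[OF assms] by (rule sums_summable)
  show "\<exists>N. \<forall>i\<ge>N. norm ((1 / \<beta>^(Suc i)) *\<^sub>R qv (\<omega> (j + i))) \<le> (1/\<beta>) ^ Suc i"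
    using assms norm_qv_le_1 by (auto simp: power_divide intro!: divide_right_mono)
qed

lemma tailpt_Suc:
  assumes "(\<beta>::real) > 1"
  shows "tailpt \<beta> \<omega> j = fmap \<beta> (\<omega> j) (tailpt \<beta> \<omega> (Suc j))"
proof -
  let ?f = "\<lambda>i. (1 / \<beta>^(Suc i)) *\<^sub>R qv (\<omega> (j + i))"
  have "tailpt \<beta> \<omega> j = ?f 0 + (\<Sum>i. ?f (Suc i))"
    unfolding tailpt_def using suminf_split_head[OF summable_tailpt[OF assms, of \<omega> j]] by simp
  also have "(\<Sum>i. ?f (Suc i)) = (\<Sum>i. (1/\<beta>) *\<^sub>R ((1 / \<beta>^(Suc i)) *\<^sub>R qv (\<omega> (Suc j + i))))"
    by (intro suminf_cong) simp
  also have "\<dots> = (1/\<beta>) *\<^sub>R tailpt \<beta> \<omega> (Suc j)"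
    unfolding tailpt_def by (rule suminf_scaleR_right[OF summable_tailpt[OF assms], symmetric])
  finally show ?thesis
    by (simp add: fmap_def scaleR_add_right)
qed

lemma tailpt_in_simplex:
  assumes "(\<beta>::real) > 1"
  shows "fst (tailpt \<beta> \<omega> j) \<ge> 0" "snd (tailpt \<beta> \<omega> j) \<ge> 0"
    "fst (tailpt \<beta> \<omega> j) + snd (tailpt \<beta> \<omega> j) \<le> 1/(\<beta>-1)"
proof -
  let ?f = "\<lambda>i. (1 / \<beta>^(Suc i)) *\<^sub>R qv (\<omega> (j + i))"
  have coord_sum: "bounded_linear (\<lambda>z::real\<times>real. fst z + snd z)"
    by (intro bounded_linear_add bounded_linear_fst bounded_linear_snd)
  note s = summable_tailpt[OF assms]
  have "fst (tailpt \<beta> \<omega> j) = (\<Sum>i. fst (?f i))"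
    unfolding tailpt_def by (rule bounded_linear.suminf[OF bounded_linear_fst s])
  also have "\<dots> \<ge> 0"
    using assms qv_nonneg by (intro suminf_nonneg bounded_linear.summable[OF bounded_linear_fst s]) auto
  finally show "fst (tailpt \<beta> \<omega> j) \<ge> 0" .
  have "snd (tailpt \<beta> \<omega> j) = (\<Sum>i. snd (?f i))"
    unfolding tailpt_def by (rule bounded_linear.suminf[OF bounded_linear_snd s])
  also have "\<dots> \<ge> 0"
    using assms qv_nonneg by (intro suminf_nonneg bounded_linear.summable[OF bounded_linear_snd s]) auto
  finally show "snd (tailpt \<beta> \<omega> j) \<ge> 0" .
  have "fst (tailpt \<beta> \<omega> j) + snd (tailpt \<beta> \<omega> j) = (\<Sum>i. fst (?f i) + snd (?f i))"
    unfolding tailpt_def by (rule bounded_linear.suminf[OF coord_sum s])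
  also have "\<dots> \<le> (\<Sum>i. (1/\<beta>) ^ Suc i)"
  proof (rule suminf_le)
    show "fst (?f i) + snd (?f i) \<le> (1/\<beta>) ^ Suc i" for i
      using assms qv_coord_sum_le_1[of "\<omega> (j + i)"]
      by (simp add: power_divide flip: add_divide_distrib) (intro divide_right_mono; simp)
    show "summable (\<lambda>i. fst (?f i) + snd (?f i))"
      by (rule bounded_linear.summable[OF coord_sum s])
    show "summable (\<lambda>i. (1/\<beta>) ^ Suc i)"
      using sums_inverse_powers[OF assms] by (rule sums_summable)
  qed
  also have "\<dots> = 1/(\<beta> - 1)"
    using sums_inverse_powers[OF assms] by (rule sums_unique[symmetric])
  finally show "fst (tailpt \<beta> \<omega> j) + snd (tailpt \<beta> \<omega> j) \<le> 1/(\<beta>-1)" .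
qed

lemma prefix_eq_iff: "prefix (length w) \<omega> = w \<longleftrightarrow> (\<forall>i<length w. \<omega> i = w ! i)"
  unfolding subsequence_def list_eq_iff_nth_eq by auto

lemma tailpt_word:
  assumes "(\<beta>::real) > 1" and "prefix (length w) (suffix m \<omega>) = w"
  shows "tailpt \<beta> \<omega> m = foldr (fmap \<beta>) w (tailpt \<beta> \<omega> (m + length w))"
  using assms(2) unfolding prefix_eq_iff suffix_nth
proof (induction w arbitrary: m)
  case (Cons d w)
  have "\<omega> m = d"
    using Cons.prems by (metis add_0_right length_Cons nth_Cons_0 zero_less_Suc)
  moreover have "\<forall>i<length w. \<omega> (Suc m + i) = w ! i"
    using Cons.prems by (metis Suc_less_eq add_Suc_shift length_Cons nth_Cons_Suc)
  ultimately show ?case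
    using Cons.IH[of "Suc m"] tailpt_Suc[OF assms(1), of \<omega> m] by simp
qed simp

lemma snd_fmap_01: "i \<in> {0,1} \<Longrightarrow> snd (fmap \<beta> i z) = snd z / \<beta>"
  by (cases z) (auto simp: fmap_Pair qv_def)

lemma snd_funpow_fmap_01: "j \<in> {0,1} \<Longrightarrow> snd ((fmap \<beta> j ^^ n) z) = snd z / \<beta>^n"
  by (induction n) (auto simp: snd_fmap_01)

lemma snd_less_on_fmap_funpow_Hset:
  assumes "(\<beta>::real) > 1" and "n \<ge> 1" and "i \<in> {0,1}" "j \<in> {0,1}"
    and "z \<in> (fmap \<beta> i \<circ> fmap \<beta> j ^^ n) ` Hset \<beta>"
  shows "snd z < 1/\<beta>^3"
proof -
  obtain h where h: "h \<in> Hset \<beta>" and z: "z = (fmap \<beta> i \<circ> fmap \<beta> j ^^ n) h"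
    using assms(5) by blast
  have "snd z = snd h / \<beta>^(n+1)"
    using assms(3,4) by (simp add: z snd_fmap_01 snd_funpow_fmap_01 field_simps)
  also have "\<dots> < (1/\<beta>) / \<beta>^(n+1)"
    using assms(1) h by (intro divide_strict_right_mono) (auto simp: Hset_def)
  also have "\<dots> = 1 / \<beta>^(n+2)"
    by (simp add: field_simps)
  also have "\<dots> \<le> 1 / \<beta>^3"
    using assms(1,2) by (intro divide_left_mono power_increasing) auto
  finally show ?thesis .
qed

lemma open_fmap_image:
  assumes "\<beta> \<noteq> 0" and "open S"
  shows "open (fmap \<beta> i ` S)"
proof -
  have "fmap \<beta> i ` S = (\<lambda>z. (1/\<beta>) *\<^sub>R qv i + (1/\<beta>) *\<^sub>R z) ` S"
    by (simp add: fmap_def scaleR_add_right add.commute)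
  then show ?thesis
    using assms by (simp add: open_affinity)
qed

lemma open_funpow_fmap_image:
  assumes "\<beta> \<noteq> 0" and "open S"
  shows "open ((fmap \<beta> i ^^ n) ` S)"
proof (induction n)
  case (Suc n)
  show ?case
    unfolding funpow.simps(2) image_comp[symmetric] by (rule open_fmap_image[OF assms(1) Suc])
qed (simp add: assms(2))

lemma open_Hset: "open (Hset \<beta>)"
  unfolding Hset_def case_prod_unfold
  by (simp add: open_Collect_conj open_Collect_less continuous_intros)

lemma closed_Cpart:
  assumes "\<beta> \<noteq> 0" and "closed T"
  shows "closed (Cpart \<beta> i j T)"
  unfolding Cpart_def image_comp[symmetric]
  using assms by (intro closed_Diff open_UN ballI open_Un open_fmap_image open_funpow_fmap_image open_Hset)

lemma closed_Ct: "closed (Ct01 \<beta>)" "closed (Ct12 \<beta>)" "closed (Ct02 \<beta>)"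
  unfolding Ct01_def Ct12_def Ct02_def case_prod_unfold
  by (simp_all add: closed_Collect_conj closed_Collect_le continuous_intros)

lemma closed_Cset: "\<beta> \<noteq> 0 \<Longrightarrow> closed (Cset \<beta>)"
  unfolding Cset_def by (intro closed_Un closed_Cpart closed_Ct)

lemma C01_block_inequality:
  assumes "3/2 < (\<beta>::real)" and "\<beta> \<le> 31/20"
  shows "1/\<beta> + 1/\<beta>^2 + 1/(\<beta>^7*(\<beta>-1)) \<le> 1/(\<beta>*(\<beta>-1))"
proof -
  have "(\<beta> - 31/20) * (\<beta> + 11/20) \<le> 0"
    using assms by (intro mult_nonpos_nonneg) auto
  then have quadratic: "\<beta>^2 - \<beta> - 1 \<le> -(59/400)"
    by (simp add: power2_eq_square algebra_simps)
  have "(3/2)^5 \<le> \<beta>^5"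
    using assms by (intro power_mono) auto
  then have "\<beta>^5 * (\<beta>^2 - \<beta> - 1) \<le> (3/2)^5 * (\<beta>^2 - \<beta> - 1)"
    using quadratic by (intro mult_right_mono_neg) auto
  also have "\<dots> \<le> (3/2)^5 * (-(59/400))"
    using quadratic by (intro mult_left_mono) auto
  finally have "\<beta>^5 * (\<beta>^2 - \<beta> - 1) \<le> -1"
    by (simp add: power_divide)
  then have numerator: "\<beta>^6*(\<beta>-1) + \<beta>^5*(\<beta>-1) + 1 \<le> \<beta>^6"
    by (simp add: algebra_simps eval_nat_numeral)
  define D where "D = \<beta>^7 * (\<beta> - 1)"
  have "D > 0"
    using assms by (simp add: D_def)
  have over_D: "1/\<beta> = \<beta>^6*(\<beta>-1) / D" "1/\<beta>^2 = \<beta>^5*(\<beta>-1) / D"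
    "1/(\<beta>^7*(\<beta>-1)) = 1 / D" "1/(\<beta>*(\<beta>-1)) = \<beta>^6 / D"
    using assms by (auto simp: D_def field_simps eval_nat_numeral)
  have "1/\<beta> + 1/\<beta>^2 + 1/(\<beta>^7*(\<beta>-1)) = (\<beta>^6*(\<beta>-1) + \<beta>^5*(\<beta>-1) + 1) / D"
    unfolding over_D by (simp add: add_divide_distrib)
  also have "\<dots> \<le> \<beta>^6 / D"
    using \<open>D > 0\<close> numerator by (simp add: divide_right_mono)
  finally show ?thesis
    unfolding over_D .
qed

lemma in_Cpart_01_if_snd_greater:
  assumes "(\<beta>::real) > 1" and "z \<in> Ct01 \<beta>" and "1/\<beta>^3 < snd z"
  shows "z \<in> Cpart \<beta> 0 1 (Ct01 \<beta>)"
  unfolding Cpart_def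
proof (intro DiffI notI)
  show "z \<in> Ct01 \<beta>"
    by (rule assms(2))
  assume "z \<in> (\<Union>n\<in>{1..}. (fmap \<beta> 0 \<circ> fmap \<beta> 1 ^^ n) ` Hset \<beta> \<union> (fmap \<beta> 1 \<circ> fmap \<beta> 0 ^^ n) ` Hset \<beta>)"
  then obtain n where "n \<ge> 1"
    and "z \<in> (fmap \<beta> 0 \<circ> fmap \<beta> 1 ^^ n) ` Hset \<beta> \<union> (fmap \<beta> 1 \<circ> fmap \<beta> 0 ^^ n) ` Hset \<beta>"
    by auto
  then have "snd z < 1/\<beta>^3"
    using snd_less_on_fmap_funpow_Hset[OF assms(1) \<open>n \<ge> 1\<close>, of 0 1 z]
      snd_less_on_fmap_funpow_Hset[OF assms(1) \<open>n \<ge> 1\<close>, of 1 0 z] by blast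
  with assms(3) show False
    by simp
qed

definition C01_block :: "nat list" where
  "C01_block = [1, 2, 0, 0, 0, 0, 0]"

lemma foldr_C01_block:
  "\<beta> \<noteq> 0 \<Longrightarrow> foldr (fmap \<beta>) C01_block (a, c) = (1/\<beta> + a/\<beta>^7, 1/\<beta>^2 + c/\<beta>^7)"
  by (simp add: C01_block_def fmap_Pair qv_def field_simps eval_nat_numeral)

lemma foldr_C01_block_in_Cset:
  assumes "3/2 < (\<beta>::real)" and "\<beta> \<le> 31/20"
    and "a \<ge> 0" "c \<ge> 0" "a + c \<le> 1/(\<beta>-1)"
  shows "foldr (fmap \<beta>) C01_block (a, c) \<in> Cset \<beta>"
proof -
  have "\<beta> > 1"
    using assms(1) by simp
  define x where "x = 1/\<beta> + a/\<beta>^7"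
  define y where "y = 1/\<beta>^2 + c/\<beta>^7"
  have "x + y = 1/\<beta> + 1/\<beta>^2 + (a + c)/\<beta>^7"
    by (simp add: x_def y_def add_divide_distrib)
  also have "\<dots> \<le> 1/\<beta> + 1/\<beta>^2 + (1/(\<beta>-1))/\<beta>^7"
    using \<open>\<beta> > 1\<close> assms(5) by (intro add_left_mono divide_right_mono) simp_all
  also have "\<dots> = 1/\<beta> + 1/\<beta>^2 + 1/(\<beta>^7*(\<beta>-1))"
    by (simp only: divide_divide_eq_left mult.commute)
  also have "\<dots> \<le> 1/(\<beta>*(\<beta>-1))"
    by (rule C01_block_inequality[OF assms(1,2)])
  finally have "(x, y) \<in> Ct01 \<beta>"
    using \<open>\<beta> > 1\<close> assms(3,4) by (simp add: Ct01_def x_def y_def)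
  moreover have "1/\<beta>^3 < 1/\<beta>^2"
    using \<open>\<beta> > 1\<close> by (intro divide_strict_left_mono power_strict_increasing) auto
  moreover have "0 \<le> c/\<beta>^7"
    using \<open>\<beta> > 1\<close> assms(4) by simp
  ultimately have "(x, y) \<in> Cpart \<beta> 0 1 (Ct01 \<beta>)"
    using \<open>\<beta> > 1\<close> by (intro in_Cpart_01_if_snd_greater) (simp_all add: y_def)
  then show ?thesis
    using \<open>\<beta> > 1\<close> by (simp add: foldr_C01_block x_def y_def Cset_def)
qed

lemma tailpt_C01_block_in_Cset:
  assumes "3/2 < (\<beta>::real)" and "\<beta> \<le> 31/20"
    and "prefix (length C01_block) (suffix m \<omega>) = C01_block"
  shows "tailpt \<beta> \<omega> m \<in> Cset \<beta>"
proof -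
  have "\<beta> > 1"
    using assms(1) by simp
  obtain a c where ac: "tailpt \<beta> \<omega> (m + length C01_block) = (a, c)"
    by fastforce
  then have "foldr (fmap \<beta>) C01_block (a, c) \<in> Cset \<beta>"
    using tailpt_in_simplex[OF \<open>\<beta> > 1\<close>, of \<omega> "m + length C01_block"]
    by (intro foldr_C01_block_in_Cset[OF assms(1,2)]) auto
  then show ?thesis
    using tailpt_word[OF \<open>\<beta> > 1\<close> assms(3)] ac by simp
qed

lemma Dset_if_infinitely_many_C01_blocks:
  assumes "3/2 < \<beta>" and "\<beta> \<le> 31/20" and "\<forall>n. \<omega> n \<in> {0, 1, 2}"
    and "infinite {k. prefix (length C01_block) (suffix (length C01_block * k) \<omega>) = C01_block}"
  shows "\<omega> \<in> Dset \<beta>"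
proof -
  let ?L = "length C01_block"
  have "(\<lambda>k. ?L * k) ` {k. prefix ?L (suffix (?L * k) \<omega>) = C01_block} \<subseteq> {j. tailpt \<beta> \<omega> j \<in> Cset \<beta>}"
    using tailpt_C01_block_in_Cset[OF assms(1,2)] by blast
  moreover have "inj (\<lambda>k. ?L * k)"
    by (intro injI) (simp add: C01_block_def)
  then have "infinite ((\<lambda>k. ?L * k) ` {k. prefix ?L (suffix (?L * k) \<omega>) = C01_block})"
    using assms(4) by (simp add: finite_image_iff inj_on_subset)
  ultimately have "infinite {j. tailpt \<beta> \<omega> j \<in> Cset \<beta>}"
    by (rule infinite_super)
  with assms(3) show ?thesis
    by (simp add: Dset_def)
qed

lemma cubic_injective:
  fixes x y :: real
  assumes "x^3 - 2*x^2 + 2*x = y^3 - 2*y^2 + 2*y"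
  shows "x = y"
proof -
  have "(x^3 - 2*x^2 + 2*x) - (y^3 - 2*y^2 + 2*y)
      = (x - y) * ((3/4)*(x + y - 4/3)^2 + (1/4)*(x - y)^2 + 2/3)"
    unfolding power2_eq_square power3_eq_cube by algebra
  moreover have "(3/4)*(x + y - 4/3)^2 + (1/4)*(x - y)^2 + 2/3 > (0::real)"
    by (intro add_nonneg_pos add_nonneg_nonneg) auto
  ultimately show ?thesis
    using assms by simp
qed

lemma beta_star_le: "beta_star \<le> 31/20"
proof -
  have "\<exists>x\<ge>3/2. x \<le> 31/20 \<and> x^3 - 2*x^2 + 2*x = (2::real)"
    by (intro IVT' continuous_intros) (simp_all add: power_divide)
  then obtain x :: real where "x \<le> 31/20" and root: "x^3 - 2*x^2 + 2*x = 2"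
    by blast
  moreover have "beta_star = x"
    unfolding beta_star_def using root by (rule the_equality) (metis cubic_injective root)
  ultimately show ?thesis
    by simp
qed

lemma suffix_comb_seq: "suffix n (comb_seq n \<omega> \<omega>') = \<omega>'"
  by (auto simp: fun_eq_iff split: split_comb_seq)

lemma prefix_comb_seq: "prefix n (comb_seq n \<omega> \<omega>') = prefix n \<omega>"
  unfolding subsequence_def by (simp add: comb_seq_less)

context sequence_space
begin

lemma measurable_suffix: "suffix n \<in> measurable S S"
  unfolding suffix_def
  by (rule measurable_PiM_single') (auto simp: measurable_component_singleton space_PiM)

lemma comb_seq_in_space:
  "\<omega> \<in> space S \<Longrightarrow> \<omega>' \<in> space S \<Longrightarrow> comb_seq n \<omega> \<omega>' \<in> space S"
  by (auto simp: space_PiM PiE_iff comb_seq_def)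

lemma emeasure_prefix_suffix:
  assumes A: "A \<in> sets S" and X: "X \<in> sets S"
    and A_prefix: "\<And>\<omega> \<omega>'. \<omega> \<in> space S \<Longrightarrow> \<omega>' \<in> space S \<Longrightarrow>
      prefix n \<omega> = prefix n \<omega>' \<Longrightarrow> \<omega> \<in> A \<Longrightarrow> \<omega>' \<in> A"
  shows "emeasure S {\<omega>\<in>A. suffix n \<omega> \<in> X} = emeasure S A * emeasure S X"
proof -
  let ?Y = "{\<omega>\<in>A. suffix n \<omega> \<in> X}"
  let ?comb = "\<lambda>(\<omega>, \<omega>'). comb_seq n \<omega> \<omega>'"
  have "?Y = A \<inter> (suffix n -` X \<inter> space S)"
    using sets.sets_into_space[OF A] by auto
  then have Y: "?Y \<in> sets S"
    using A measurable_sets[OF measurable_suffix X] by auto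
  have "(a, b) \<in> ?comb -` ?Y \<inter> space (S \<Otimes>\<^sub>M S) \<longleftrightarrow> (a, b) \<in> A \<times> X" for a b
    using A_prefix[of a "comb_seq n a b"] A_prefix[of "comb_seq n a b" a] comb_seq_in_space[of a b n]
      sets.sets_into_space[OF A] sets.sets_into_space[OF X]
    by (auto simp: space_pair_measure suffix_comb_seq prefix_comb_seq)
  then have preimage: "?comb -` ?Y \<inter> space (S \<Otimes>\<^sub>M S) = A \<times> X"
    by (simp add: set_eq_iff)
  have "emeasure S ?Y = emeasure (distr (S \<Otimes>\<^sub>M S) S ?comb) ?Y"
    by (simp only: PiM_comb_seq)
  also have "\<dots> = emeasure (S \<Otimes>\<^sub>M S) (A \<times> X)"
    unfolding preimage[symmetric] by (rule emeasure_distr[OF measurable_comb_seq Y])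
  also have "\<dots> = emeasure S A * emeasure S X"
    by (rule P.emeasure_pair_measure_Times[OF A X])
  finally show ?thesis .
qed

lemma emeasure_suffix_vimage:
  assumes "X \<in> sets S"
  shows "emeasure S (suffix n -` X \<inter> space S) = emeasure S X"
proof -
  have "suffix n -` X \<inter> space S = {\<omega>\<in>space S. suffix n \<omega> \<in> X}"
    by auto
  also have "emeasure S \<dots> = emeasure S (space S) * emeasure S X"
    by (rule emeasure_prefix_suffix[OF sets.top assms]) auto
  finally show ?thesis
    by (simp add: P.emeasure_space_1)
qed

text \<open>The event F that the block A occurs at no multiple of L is the intersection of the
  complement of A with the preimage of F under suffix L; the two are independent, so
  P(F) = (1 - P(A)) P(F).\<close>

lemma null_sets_never_block:
  assumes A: "A \<in> sets S" and "measure S A > 0"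
    and A_prefix: "\<And>\<omega> \<omega>'. \<omega> \<in> space S \<Longrightarrow> \<omega>' \<in> space S \<Longrightarrow>
      prefix L \<omega> = prefix L \<omega>' \<Longrightarrow> \<omega> \<in> A \<Longrightarrow> \<omega>' \<in> A"
  shows "{\<omega>\<in>space S. \<forall>k. suffix (L * k) \<omega> \<notin> A} \<in> null_sets S"
proof -
  define F where "F = {\<omega>\<in>space S. \<forall>k. suffix (L * k) \<omega> \<notin> A}"
  have F_eq: "F = (\<Inter>k. space S - suffix (L * k) -` A \<inter> space S)"
    by (auto simp: F_def)
  have F: "F \<in> sets S"
    unfolding F_eq using measurable_sets[OF measurable_suffix A]
    by (intro sets.countable_INT' sets.Diff sets.top) auto
  have "(\<forall>k. suffix (L * k) \<omega> \<notin> A) \<longleftrightarrow> \<omega> \<notin> A \<and> (\<forall>k. suffix (L * k) (suffix L \<omega>) \<notin> A)"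
    for \<omega> :: "nat \<Rightarrow> 'a"
  proof -
    have "suffix (L * Suc k) \<omega> = suffix (L * k) (suffix L \<omega>)" for k
      by simp
    then show ?thesis
      by (metis not0_implies_Suc mult_0_right suffix_0)
  qed
  then have "\<omega> \<in> F \<longleftrightarrow> \<omega> \<in> space S - A \<and> suffix L \<omega> \<in> F" for \<omega>
    using measurable_space[OF measurable_suffix, of \<omega> L] unfolding F_def by blast
  then have F_rec: "F = {\<omega>\<in>space S - A. suffix L \<omega> \<in> F}"
    by blast
  have compl_prefix: "\<omega>' \<in> space S - A"
    if "\<omega> \<in> space S" "\<omega>' \<in> space S" "prefix L \<omega> = prefix L \<omega>'" "\<omega> \<in> space S - A" for \<omega> \<omega>'
    using A_prefix[of \<omega>' \<omega>] that by auto
  have "emeasure S {\<omega>\<in>space S - A. suffix L \<omega> \<in> F} = emeasure S (space S - A) * emeasure S F"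
    by (rule emeasure_prefix_suffix[OF sets.compl_sets[OF A] F compl_prefix])
  then have "emeasure S F = emeasure S (space S - A) * emeasure S F"
    unfolding F_rec[symmetric] .
  then have "enn2real (emeasure S F) = enn2real (emeasure S (space S - A) * emeasure S F)"
    by (rule arg_cong)
  then have "measure S F = (1 - measure S A) * measure S F"
    unfolding enn2real_mult measure_def[symmetric] P.prob_compl[OF A] .
  then have "measure S F = 0"
    using \<open>measure S A > 0\<close> unfolding mult_cancel_right1 by simp
  then show ?thesis
    unfolding F_def[symmetric] using F by (intro null_setsI) (simp_all add: P.emeasure_eq_measure)
qed

lemma AE_infinitely_many_blocks:
  assumes A: "A \<in> sets S" and "measure S A > 0"
    and A_prefix: "\<And>\<omega> \<omega>'. \<omega> \<in> space S \<Longrightarrow> \<omega>' \<in> space S \<Longrightarrow>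
      prefix L \<omega> = prefix L \<omega>' \<Longrightarrow> \<omega> \<in> A \<Longrightarrow> \<omega>' \<in> A"
  shows "AE \<omega> in S. infinite {k. suffix (L * k) \<omega> \<in> A}"
proof -
  define F where "F = {\<omega>\<in>space S. \<forall>k. suffix (L * k) \<omega> \<notin> A}"
  have F: "F \<in> null_sets S"
    unfolding F_def using assms by (rule null_sets_never_block)
  have "suffix (L * N) -` F \<inter> space S \<in> null_sets S" for N
    using F emeasure_suffix_vimage[of F "L * N"] measurable_sets[OF measurable_suffix, of F "L * N"]
    by (simp add: null_sets_def)
  then have "(\<Union>N. suffix (L * N) -` F \<inter> space S) \<in> null_sets S"
    by (rule null_sets_UN)
  moreover have "\<omega> \<in> (\<Union>N. suffix (L * N) -` F \<inter> space S)"
    if \<omega>: "\<omega> \<in> space S" and finite: "finite {k. suffix (L * k) \<omega> \<in> A}" for \<omega>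
  proof -
    obtain N where N: "\<forall>k\<in>{k. suffix (L * k) \<omega> \<in> A}. k < N"
      using finite unfolding finite_nat_set_iff_bounded by blast
    have "suffix (L * k) (suffix (L * N) \<omega>) \<notin> A" for k
      using N[rule_format, of "N + k"] by (auto simp: distrib_left)
    then have "suffix (L * N) \<omega> \<in> F"
      using measurable_space[OF measurable_suffix \<omega>] by (simp add: F_def)
    with \<omega> show ?thesis
      by blast
  qed
  ultimately show ?thesis
    by (intro AE_I'[of "\<Union>N. suffix (L * N) -` F \<inter> space S"]) auto
qed

end

abbreviation digit_measure :: "nat measure" where
  "digit_measure \<equiv> uniform_count_measure {0, 1, 2}"

interpretation Digits: sequence_space digit_measure
proof -
  have "prob_space digit_measure"
    by (rule prob_space_uniform_count_measure) auto
  then show "sequence_space digit_measure"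
    by (simp add: sequence_space_def product_prob_space_def product_sigma_finite_def
        product_prob_space_axioms_def prob_space_imp_sigma_finite)
qed

lemma space_Digits: "space Digits.S = {\<omega>. \<forall>n. \<omega> n \<in> {0, 1, 2}}"
  by (simp add: space_PiM space_uniform_count_measure PiE_def Pi_def)

lemma emeasure_Digits_word:
  assumes "set w \<subseteq> {0, 1, 2}"
  shows "emeasure Digits.S {\<omega>\<in>space Digits.S. prefix (length w) \<omega> = w} = ennreal ((1/3) ^ length w)"
proof -
  have "{\<omega>\<in>space Digits.S. prefix (length w) \<omega> = w}
      = {\<omega>\<in>space Digits.S. \<forall>i\<in>{..<length w}. \<omega> i \<in> {w ! i}}"
    unfolding prefix_eq_iff by auto
  also have "emeasure Digits.S \<dots> = (\<Prod>i<length w. emeasure digit_measure {w ! i})"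
    using assms by (intro Digits.emeasure_PiM_Collect) (auto simp: nth_mem subset_iff)
  also have "\<dots> = (\<Prod>i<length w. ennreal (1/3))"
    using assms by (intro prod.cong refl) (auto simp: emeasure_uniform_count_measure nth_mem subset_iff
        ennreal_divide_times divide_ennreal[symmetric])
  finally show ?thesis
    by (simp add: prod_ennreal[symmetric] ennreal_power)
qed

lemma sets_Digits_word: "{\<omega>\<in>space Digits.S. prefix (length w) \<omega> = w} \<in> sets Digits.S"
  unfolding prefix_eq_iff by measurable

lemma AE_infinitely_many_words:
  assumes "set w \<subseteq> {0, 1, 2}"
  shows "AE \<omega> in Digits.S. infinite {k. prefix (length w) (suffix (length w * k) \<omega>) = w}"
proof -
  let ?A = "{\<omega>\<in>space Digits.S. prefix (length w) \<omega> = w}"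
  have "measure Digits.S ?A > 0"
    using emeasure_Digits_word[OF assms] by (simp add: measure_def)
  then have "AE \<omega> in Digits.S. infinite {k. suffix (length w * k) \<omega> \<in> ?A}"
    by (rule Digits.AE_infinitely_many_blocks[OF sets_Digits_word]) simp
  then show ?thesis
    using AE_space
  proof eventually_elim
    case (elim \<omega>)
    moreover have "suffix n \<omega> \<in> space Digits.S" for n
      using measurable_space[OF Digits.measurable_suffix elim(2)] .
    ultimately show ?case
      by simp
  qed
qed

lemma measurable_tailpt:
  assumes "(\<beta>::real) > 1"
  shows "(\<lambda>\<omega>. tailpt \<beta> \<omega> j) \<in> borel_measurable Digits.S"
proof (rule borel_measurable_LIMSEQ_metric)
  have "qv \<in> borel_measurable digit_measure"
    by (simp add: measurable_cong_sets[OF sets_uniform_count_measure_count_space refl])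
  then show "(\<lambda>\<omega>. \<Sum>i<n. (1 / \<beta>^(Suc i)) *\<^sub>R qv (\<omega> (j + i))) \<in> borel_measurable Digits.S" for n
    by (intro borel_measurable_sum borel_measurable_scaleR borel_measurable_const
        measurable_compose[OF measurable_component_singleton]) auto
  show "(\<lambda>n. \<Sum>i<n. (1 / \<beta>^(Suc i)) *\<^sub>R qv (\<omega> (j + i))) \<longlonglongrightarrow> tailpt \<beta> \<omega> j" for \<omega>
    unfolding tailpt_def by (rule summable_LIMSEQ[OF summable_tailpt[OF assms]])
qed

lemma sets_Dset:
  assumes "(\<beta>::real) > 1"
  shows "Dset \<beta> \<in> sets Digits.S"
proof -
  have [measurable]: "(\<lambda>\<omega>. tailpt \<beta> \<omega> j) \<in> borel_measurable Digits.S" for j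
    using assms by (rule measurable_tailpt)
  have [measurable]: "Cset \<beta> \<in> sets borel"
    using assms closed_Cset by (simp add: borel_closed)
  have "Dset \<beta> = {\<omega>\<in>space Digits.S. \<forall>N. \<exists>j\<ge>N. tailpt \<beta> \<omega> j \<in> Cset \<beta>}"
    unfolding Dset_def space_Digits infinite_nat_iff_unbounded_le by auto
  also have "\<dots> \<in> sets Digits.S"
    by measurable
  finally show ?thesis .
qed

lemma AE_Dset:
  assumes "3/2 < \<beta>" and "\<beta> \<le> 31/20"
  shows "AE \<omega> in Digits.S. \<omega> \<in> Dset \<beta>"
proof -
  have "set C01_block \<subseteq> {0, 1, 2}"
    by (simp add: C01_block_def)
  then have "AE \<omega> in Digits.S.
      infinite {k. prefix (length C01_block) (suffix (length C01_block * k) \<omega>) = C01_block}"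
    by (rule AE_infinitely_many_words)
  then show ?thesis
    using AE_space
  proof eventually_elim
    case (elim \<omega>)
    have "\<forall>n. \<omega> n \<in> {0, 1, 2}"
      using elim(2) unfolding space_Digits by simp
    then show ?case
      using elim(1) by (rule Dset_if_infinitely_many_C01_blocks[OF assms])
  qed
qed

theorem lemma6p8:
  fixes \<beta> :: real
  assumes "3/2 < \<beta>" and "\<beta> \<le> beta_star"
  shows "emeasure Ups (Dset \<beta>) = 1"
proof -
  have "\<beta> \<le> 31/20"
    using assms(2) beta_star_le by linarith
  with assms(1) have "AE \<omega> in Digits.S. \<omega> \<in> Dset \<beta>"
    by (rule AE_Dset)
  then show ?thesis
    unfolding Ups_def using assms(1) by (intro Digits.emeasure_eq_1_AE sets_Dset) auto
qed

end
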